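(* Let $n\ge2$, $A_0,\dots,A_{n-1}\in\mathbb{R}$, $A_n=1$, $F(a)=\sum_{k=0}^nA_ka^k$. Let $x(a)$ be a smooth function on an open interval $I\subset(0,\infty)$ with $\dot x\neq 0$, and on $I\times\mathbb{R}$ let $H=\Pi^2+aP_y^2$, $\Pi=\frac{a}{\dot x}P_a$, $G=\sum_{k=0}^nA_kH^kP_y^{2(n-k)}$. Let $$Q_1=\sum_{k=1}^n b_k(a)\,\Pi^{2k-1}P_y^{2(n-k)+1}$$ with smooth functions $b_k$ of $a$, and $S_1=Q_1+yG$. Then $\{H,S_1\}=0$ if and only if, for every $k\in\{1,\dots,n\}$, $$b_k=\sum_{s=1}^k\frac{F^{(k-s)}}{(k-s)!}\,\frac{D_a^s x}{(1/2)_s}=\mathrm{Op}_k[F]x-\frac{F^{(k)}}{k!}\,x,$$ and $x$, after adding a suitable constant (which does not change $H$), satisfies the linear homogeneous ODE of order $n$ $$\mathrm{Op}_n[F]\,x=0 .$$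
   Context: $D_a=d/da$, $F^{(m)}=D_a^mF$, a dot denotes $d/da$; $\{\cdot,\cdot\}$ is the canonical Poisson bracket with $(P_a,P_y)$ conjugate to $(a,y)$. Pochhammer symbol: $(z)_0=1$, $(z)_s=z(z+1)\cdots(z+s-1)$. For a polynomial $F$ and integer $m\ge0$, the linear differential operator $\mathrm{Op}_m[F]=\sum_{s=0}^m\frac{F^{(m-s)}}{(m-s)!}\frac{1}{(1/2)_s}D_a^s$. *)

theory Defs
  imports "HOL-Analysis.Analysis"
begin

definition smooth_real_on :: "real set \<Rightarrow> (real \<Rightarrow> real) \<Rightarrow> bool" where
  "smooth_real_on I f \<longleftrightarrow> (\<forall>k. \<forall>t\<in>I. ((deriv ^^ k) f) field_differentiable (at t))"

text \<open>Phase-space functions are written as functions of (a, y, P_a, P_y).\<close>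

definition poisson ::
  "(real \<Rightarrow> real \<Rightarrow> real \<Rightarrow> real \<Rightarrow> real) \<Rightarrow> (real \<Rightarrow> real \<Rightarrow> real \<Rightarrow> real \<Rightarrow> real)
     \<Rightarrow> real \<Rightarrow> real \<Rightarrow> real \<Rightarrow> real \<Rightarrow> real" where
  "poisson f g a y pa py =
     deriv (\<lambda>t. f t y pa py) a * deriv (\<lambda>t. g a y t py) pa
   - deriv (\<lambda>t. f a y t py) pa * deriv (\<lambda>t. g t y pa py) a
   + deriv (\<lambda>t. f a t pa py) y * deriv (\<lambda>t. g a y pa t) py
   - deriv (\<lambda>t. f a y pa t) py * deriv (\<lambda>t. g a t pa py) y"

definition Pi_fun :: "(real \<Rightarrow> real) \<Rightarrow> real \<Rightarrow> real \<Rightarrow> real" where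
  "Pi_fun x a pa = a / deriv x a * pa"

definition H_fun :: "(real \<Rightarrow> real) \<Rightarrow> real \<Rightarrow> real \<Rightarrow> real \<Rightarrow> real \<Rightarrow> real" where
  "H_fun x a y pa py = (Pi_fun x a pa)^2 + a * py^2"

definition G_fun :: "nat \<Rightarrow> (nat \<Rightarrow> real) \<Rightarrow> (real \<Rightarrow> real) \<Rightarrow> real \<Rightarrow> real \<Rightarrow> real \<Rightarrow> real \<Rightarrow> real" where
  "G_fun n A x a y pa py = (\<Sum>k\<le>n. A k * (H_fun x a y pa py)^k * py^(2*(n-k)))"

definition Q1_fun :: "nat \<Rightarrow> (nat \<Rightarrow> real \<Rightarrow> real) \<Rightarrow> (real \<Rightarrow> real) \<Rightarrow> real \<Rightarrow> real \<Rightarrow> real \<Rightarrow> real \<Rightarrow> real" where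
  "Q1_fun n b x a y pa py = (\<Sum>k=1..n. b k a * (Pi_fun x a pa)^(2*k-1) * py^(2*(n-k)+1))"

definition S1_fun :: "nat \<Rightarrow> (nat \<Rightarrow> real) \<Rightarrow> (nat \<Rightarrow> real \<Rightarrow> real) \<Rightarrow> (real \<Rightarrow> real)
     \<Rightarrow> real \<Rightarrow> real \<Rightarrow> real \<Rightarrow> real \<Rightarrow> real" where
  "S1_fun n A b x a y pa py = Q1_fun n b x a y pa py + y * G_fun n A x a y pa py"

definition Op :: "nat \<Rightarrow> (real \<Rightarrow> real) \<Rightarrow> (real \<Rightarrow> real) \<Rightarrow> real \<Rightarrow> real" where
  "Op m F u a = (\<Sum>s=0..m. (deriv ^^ (m-s)) F a / fact (m-s) * (1 / pochhammer (1/2) s) * (deriv ^^ s) u a)"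

end

theory Submission
  imports Defs
begin

text \<open>
  Write Pi = (a/x') P_a. For any phase function f = Phi(a, y, Pi, P_y) the bracket is
  {H, f} = (a/x') (P_y^2 dPhi/dPi - 2 Pi dPhi/da) - 2 a P_y dPhi/dy: the derivative of a/x'
  cancels. For S_1 = Q_1 + y G the y G part drops out of the first term because G depends on
  (a, Pi) only through H, and the Taylor expansion of the homogenised polynomial F gives
  G = sum_m F^(m)(a)/m! Pi^(2m) P_y^(2(n-m)). Hence {H, S_1} is P_y times a polynomial in
  Pi^2 and P_y^2, and it vanishes iff (2m+1) b_(m+1) - 2 b_m' = 2 x' F^(m)/m! for m = 0..n,
  with b_0 = b_(n+1) = 0. Because (1/2)_(s+1) = (s + 1/2) (1/2)_s, the tails
  Op_m[F] x - F^(m)/m! x satisfy the same recursion, so the equations for m < n determine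
  the b_k; the last one says that b_n + x is constant, i.e. Op_n[F] (x + c) = 0.
\<close>

section \<open>Taylor coefficients of a polynomial\<close>

definition taylor_coeff :: "(real \<Rightarrow> real) \<Rightarrow> nat \<Rightarrow> real \<Rightarrow> real" where
  "taylor_coeff F m a = (deriv ^^ m) F a / fact m"

lemma higher_deriv_poly:
  fixes A :: "nat \<Rightarrow> real"
  shows "(deriv ^^ m) (\<lambda>a. \<Sum>k\<le>n. A k * a ^ k)
           = (\<lambda>a. fact m * (\<Sum>j\<le>n. A j * of_nat (j choose m) * a ^ (j - m)))"
proof (induction m)
  case 0
  then show ?case by simp
next
  case (Suc m)
  have "((\<lambda>a. \<Sum>j\<le>n. A j * of_nat (j choose m) * a ^ (j - m)) has_real_derivative
          Suc m * (\<Sum>j\<le>n. A j * of_nat (j choose Suc m) * a ^ (j - Suc m))) (at a)" for a :: real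
  proof -
    have absorb: "real (j - m) * (j choose m) = Suc m * (j choose Suc m)" for j
      by (metis binomial_absorb_comp binomial_absorption of_nat_mult)
    have "((\<lambda>a. \<Sum>j\<le>n. A j * of_nat (j choose m) * a ^ (j - m)) has_real_derivative
            (\<Sum>j\<le>n. A j * (real (j - m) * (j choose m)) * a ^ (j - Suc m))) (at a)"
      by (auto intro!: derivative_eq_intros sum.cong simp: ac_simps)
    then show ?thesis
      by (simp only: absorb) (simp add: sum_distrib_left algebra_simps)
  qed
  from DERIV_cmult[OF this, of "fact m"] show ?case
    using Suc by (auto intro!: DERIV_imp_deriv simp: algebra_simps)
qed

lemma taylor_coeff_poly:
  "taylor_coeff (\<lambda>a. \<Sum>k\<le>n. A k * a ^ k) m a = (\<Sum>j\<le>n. A j * of_nat (j choose m) * a ^ (j - m))"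
  by (simp add: taylor_coeff_def higher_deriv_poly)

lemma taylor_coeff_poly_top:
  assumes "A n = 1"
  shows "taylor_coeff (\<lambda>a. \<Sum>k\<le>n. A k * a ^ k) n a = 1"
proof -
  have "(\<Sum>j\<le>n. A j * of_nat (j choose n) * a ^ (j - n)) = (\<Sum>j\<le>n. if j = n then 1 else 0)"
    by (rule sum.cong) (auto simp: assms)
  then show ?thesis by (simp add: taylor_coeff_poly)
qed

lemma smooth_real_on_poly: "smooth_real_on S (\<lambda>a. \<Sum>k\<le>n. A k * a ^ k)"
  unfolding smooth_real_on_def higher_deriv_poly field_differentiable_def
  by (auto intro!: derivative_eq_intros)

lemma homogenized_poly_expansion:
  fixes u v a :: real
  shows "(\<Sum>j\<le>n. A j * (u + a * v) ^ j * v ^ (n - j))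
       = (\<Sum>m\<le>n. taylor_coeff (\<lambda>a. \<Sum>k\<le>n. A k * a ^ k) m a * u ^ m * v ^ (n - m))"
proof -
  have "A j * (u + a * v) ^ j * v ^ (n - j)
      = (\<Sum>m\<le>n. A j * of_nat (j choose m) * a ^ (j - m) * u ^ m * v ^ (n - m))" if "j \<le> n" for j
  proof -
    have "(u + a * v) ^ j = (\<Sum>m\<le>n. of_nat (j choose m) * u ^ m * (a * v) ^ (j - m))"
      using that by (simp add: binomial_ring sum.mono_neutral_left)
    moreover have "v ^ (j - m) * v ^ (n - j) = v ^ (n - m)" if "m \<le> j" for m
      using that \<open>j \<le> n\<close> by (simp flip: power_add)
    ultimately show ?thesis
      by (auto simp: sum_distrib_left sum_distrib_right power_mult_distrib ac_simps intro!: sum.cong)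
  qed
  then have "(\<Sum>j\<le>n. A j * (u + a * v) ^ j * v ^ (n - j))
      = (\<Sum>j\<le>n. \<Sum>m\<le>n. A j * of_nat (j choose m) * a ^ (j - m) * u ^ m * v ^ (n - m))"
    by (intro sum.cong) auto
  also have "\<dots> = (\<Sum>m\<le>n. \<Sum>j\<le>n. A j * of_nat (j choose m) * a ^ (j - m) * u ^ m * v ^ (n - m))"
    by (rule sum.swap)
  finally show ?thesis
    by (simp add: taylor_coeff_poly sum_distrib_right)
qed

section \<open>The bracket of \<open>H\<close> with \<open>S\<^sub>1\<close>\<close>

text \<open>\<open>\<Phi>a\<close> and \<open>\<Phi>q\<close> are the partial derivatives of \<open>\<Phi>\<close> in its first and third argument;
  the first is stated along curves \<open>t \<mapsto> (t, q t)\<close>, as \<open>\<Pi>\<close> itself moves with \<open>a\<close>.\<close>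

lemma poisson_H_fun:
  fixes \<Phi> :: "real \<Rightarrow> real \<Rightarrow> real \<Rightarrow> real \<Rightarrow> real"
  assumes x: "deriv x field_differentiable (at a)" "deriv x a \<noteq> 0"
    and \<Phi>_a: "\<And>q dq. q a = Pi_fun x a pa \<Longrightarrow> (q has_real_derivative dq) (at a) \<Longrightarrow>
               ((\<lambda>t. \<Phi> t y (q t) py) has_real_derivative \<Phi>a + \<Phi>q * dq) (at a)"
    and \<Phi>_q: "((\<lambda>q. \<Phi> a y q py) has_real_derivative \<Phi>q) (at (Pi_fun x a pa))"
    and \<Phi>_y: "((\<lambda>t. \<Phi> a t (Pi_fun x a pa) py) has_real_derivative \<Phi>y) (at y)"
  shows "poisson (H_fun x) (\<lambda>a y pa py. \<Phi> a y (Pi_fun x a pa) py) a y pa py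
           = a / deriv x a * (py^2 * \<Phi>q - 2 * Pi_fun x a pa * \<Phi>a) - 2 * a * py * \<Phi>y"
proof -
  define w where "w = a / deriv x a"
  define P where "P = Pi_fun x a pa"
  define dP where "dP = (deriv x a - a * deriv (deriv x) a) / (deriv x a)^2 * pa"
  have Pi_a: "((\<lambda>t. Pi_fun x t pa) has_real_derivative dP) (at a)"
    unfolding Pi_fun_def dP_def using x DERIV_deriv_iff_field_differentiable
    by (auto intro!: derivative_eq_intros simp: power2_eq_square algebra_simps)
  have H_a: "deriv (\<lambda>t. H_fun x t y pa py) a = 2 * P * dP + py^2"
    unfolding H_fun_def P_def by (intro DERIV_imp_deriv) (auto intro!: derivative_eq_intros Pi_a)
  have H_pa: "deriv (\<lambda>t. H_fun x a y t py) pa = 2 * P * w"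
    unfolding H_fun_def P_def Pi_fun_def w_def using x(2)
    by (intro DERIV_imp_deriv) (auto intro!: derivative_eq_intros)
  have H_y: "deriv (\<lambda>t. H_fun x a t pa py) y = 0"
    by (simp add: H_fun_def)
  have H_py: "deriv (\<lambda>t. H_fun x a y pa t) py = 2 * a * py"
    unfolding H_fun_def by (intro DERIV_imp_deriv) (auto intro!: derivative_eq_intros)
  have f_a: "deriv (\<lambda>t. \<Phi> t y (Pi_fun x t pa) py) a = \<Phi>a + \<Phi>q * dP"
    by (intro DERIV_imp_deriv \<Phi>_a Pi_a) simp
  have "((\<lambda>t. \<Phi> a y (w * t) py) has_real_derivative \<Phi>q * w) (at pa)"
    using \<Phi>_q x(2) unfolding Pi_fun_def w_def
    by (intro DERIV_chain2[where f="\<lambda>q. \<Phi> a y q py"]) (auto intro!: derivative_eq_intros)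
  then have f_pa: "deriv (\<lambda>t. \<Phi> a y (Pi_fun x a t) py) pa = \<Phi>q * w"
    unfolding Pi_fun_def w_def by (rule DERIV_imp_deriv)
  have f_y: "deriv (\<lambda>t. \<Phi> a t (Pi_fun x a pa) py) y = \<Phi>y"
    by (rule DERIV_imp_deriv[OF \<Phi>_y])
  show ?thesis
    unfolding poisson_def H_a H_pa H_y H_py f_a f_pa f_y
    by (simp add: P_def w_def algebra_simps add_divide_distrib)
qed

definition zero_padded :: "nat \<Rightarrow> (nat \<Rightarrow> real \<Rightarrow> real) \<Rightarrow> nat \<Rightarrow> real \<Rightarrow> real" where
  "zero_padded n b k = (if k \<in> {1..n} then b k else (\<lambda>_. 0))"

lemma sum_zero_padded_Suc:
  assumes "\<And>m. g m 0 = 0"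
  shows "(\<Sum>k=1..n. g (k - 1) (b k a)) = (\<Sum>m\<le>n. g m (zero_padded n b (Suc m) a))"
proof -
  have "(\<Sum>k=1..n. g (k - 1) (b k a)) = (\<Sum>m<n. g m (zero_padded n b (Suc m) a))"
    by (simp add: sum.atLeast1_atMost_eq zero_padded_def)
  also have "\<dots> = (\<Sum>m\<le>n. g m (zero_padded n b (Suc m) a))"
    by (simp add: lessThan_Suc_atMost[symmetric] zero_padded_def assms)
  finally show ?thesis .
qed

lemma sum_deriv_zero_padded:
  assumes "\<And>m. g m 0 = 0"
  shows "(\<Sum>k=1..n. g k (deriv (b k) a)) = (\<Sum>m\<le>n. g m (deriv (zero_padded n b m) a))"
proof -
  have "(\<Sum>k=1..n. g k (deriv (b k) a)) = (\<Sum>m=1..n. g m (deriv (zero_padded n b m) a))"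
    by (simp add: zero_padded_def)
  also have "\<dots> = (\<Sum>m\<le>n. g m (deriv (zero_padded n b m) a))"
    by (intro sum.mono_neutral_left) (auto simp: zero_padded_def assms)
  finally show ?thesis .
qed

lemma odd_monomial_sum_regroup:
  fixes P py :: real
  shows "(\<Sum>k=1..n. py^2 * (f k * (real (2*k-1) * P ^ (2*k-2)) * py ^ (2*(n-k)+1))
                   - 2 * P * (g k * P ^ (2*k-1) * py ^ (2*(n-k)+1)))
       = py * (\<Sum>k=1..n. real (2*(k-1)+1) * f k * (P^2)^(k-1) * (py^2)^(n-(k-1))
                         - 2 * g k * (P^2)^k * (py^2)^(n-k))"
  unfolding sum_distrib_left
proof (rule sum.cong[OF refl])
  fix k assume "k \<in> {1..n}"
  then obtain j where k: "k = Suc j" and "j < n" by (cases k) auto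
  then have "n - j = Suc (n-k)" by simp
  then have pow: "k - 1 = j" "P ^ (2*k-2) = (P^2)^j" "P ^ (2*k-1) = P * (P^2)^j"
      "(P^2)^k = P^2 * (P^2)^j" "py ^ (2*(n-k)+1) = py * (py^2)^(n-k)"
      "(py^2)^(n-j) = py^2 * (py^2)^(n-k)" "real (2*k-1) = real (2*j+1)"
    by (simp_all add: k power_mult[symmetric])
  show "py^2 * (f k * (real (2*k-1) * P ^ (2*k-2)) * py ^ (2*(n-k)+1))
          - 2 * P * (g k * P ^ (2*k-1) * py ^ (2*(n-k)+1))
      = py * (real (2*(k-1)+1) * f k * (P^2)^(k-1) * (py^2)^(n-(k-1))
              - 2 * g k * (P^2)^k * (py^2)^(n-k))"
    unfolding pow by (simp add: power2_eq_square algebra_simps)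
qed

lemma poisson_H_S1_expanded:
  fixes x :: "real \<Rightarrow> real" and b :: "nat \<Rightarrow> real \<Rightarrow> real" and a pa :: real
  assumes x: "deriv x field_differentiable (at a)" "deriv x a \<noteq> 0"
    and b: "\<And>k. k \<in> {1..n} \<Longrightarrow> b k field_differentiable (at a)"
  defines "P \<equiv> Pi_fun x a pa"
  shows "poisson (H_fun x) (S1_fun n A b x) a y pa py
     = a / deriv x a * (\<Sum>k=1..n. py^2 * (b k a * (real (2*k-1) * P ^ (2*k-2)) * py ^ (2*(n-k)+1))
                                 - 2 * P * (deriv (b k) a * P ^ (2*k-1) * py ^ (2*(n-k)+1)))
       - 2 * a * py * G_fun n A x a y pa py"
proof -
  define \<Phi> where "\<Phi> t y q p = (\<Sum>k=1..n. b k t * q ^ (2*k-1) * p ^ (2*(n-k)+1))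
      + y * (\<Sum>j\<le>n. A j * (q^2 + t * p^2) ^ j * p ^ (2*(n-j)))" for t y q p
  define h where "h = P^2 + a * py^2"
  define \<Phi>q where "\<Phi>q = (\<Sum>k=1..n. b k a * (real (2*k-1) * P ^ (2*k-2)) * py ^ (2*(n-k)+1))
      + y * (\<Sum>j\<le>n. A j * (real j * h ^ (j-1) * (2 * P)) * py ^ (2*(n-j)))"
  define \<Phi>a where "\<Phi>a = (\<Sum>k=1..n. deriv (b k) a * P ^ (2*k-1) * py ^ (2*(n-k)+1))
      + y * (\<Sum>j\<le>n. A j * (real j * h ^ (j-1) * py^2) * py ^ (2*(n-j)))"
  have S1: "S1_fun n A b x = (\<lambda>a y pa py. \<Phi> a y (Pi_fun x a pa) py)"
    by (simp add: fun_eq_iff \<Phi>_def S1_fun_def Q1_fun_def G_fun_def H_fun_def)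
  have "poisson (H_fun x) (S1_fun n A b x) a y pa py
      = a / deriv x a * (py^2 * \<Phi>q - 2 * P * \<Phi>a) - 2 * a * py * G_fun n A x a y pa py"
    unfolding S1 P_def
  proof (rule poisson_H_fun[OF x])
    fix q dq assume "q a = Pi_fun x a pa" "(q has_real_derivative dq) (at a)"
    then show "((\<lambda>t. \<Phi> t y (q t) py) has_real_derivative \<Phi>a + \<Phi>q * dq) (at a)"
      unfolding \<Phi>_def \<Phi>a_def \<Phi>q_def h_def P_def
      by (auto intro!: derivative_eq_intros b[unfolded DERIV_deriv_iff_field_differentiable[symmetric]]
          simp: sum.distrib sum_subtractf sum_distrib_left sum_distrib_right algebra_simps numeral_2_eq_2)
  next
    show "((\<lambda>q. \<Phi> a y q py) has_real_derivative \<Phi>q) (at (Pi_fun x a pa))"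
      unfolding \<Phi>_def \<Phi>q_def h_def P_def
      by (auto intro!: derivative_eq_intros simp: algebra_simps numeral_2_eq_2)
  next
    show "((\<lambda>t. \<Phi> a t (Pi_fun x a pa) py) has_real_derivative G_fun n A x a y pa py) (at y)"
      unfolding \<Phi>_def G_fun_def H_fun_def
      by (auto intro!: derivative_eq_intros)
  qed
  \<comment> \<open>the \<open>y G\<close> terms cancel: \<open>G\<close> depends on \<open>a\<close> and \<open>\<Pi>\<close> only through \<open>h\<close>\<close>
  moreover have "py^2 * \<Phi>q - 2 * P * \<Phi>a
      = (\<Sum>k=1..n. py^2 * (b k a * (real (2*k-1) * P ^ (2*k-2)) * py ^ (2*(n-k)+1))
                   - 2 * P * (deriv (b k) a * P ^ (2*k-1) * py ^ (2*(n-k)+1)))"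
    unfolding \<Phi>q_def \<Phi>a_def by (simp add: sum.distrib sum_subtractf sum_distrib_left algebra_simps)
  ultimately show ?thesis by simp
qed

lemma poisson_H_S1:
  fixes x :: "real \<Rightarrow> real" and b :: "nat \<Rightarrow> real \<Rightarrow> real"
  assumes x: "deriv x field_differentiable (at a)" "deriv x a \<noteq> 0"
    and b: "\<And>k. k \<in> {1..n} \<Longrightarrow> b k field_differentiable (at a)"
  shows "poisson (H_fun x) (S1_fun n A b x) a y pa py
     = py * (\<Sum>m\<le>n. (a / deriv x a * (real (2*m+1) * zero_padded n b (Suc m) a
                                          - 2 * deriv (zero_padded n b m) a)
                     - 2 * a * taylor_coeff (\<lambda>a. \<Sum>k\<le>n. A k * a ^ k) m a)
                    * (Pi_fun x a pa ^ 2) ^ m * (py ^ 2) ^ (n - m))"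
proof -
  define P where "P = Pi_fun x a pa"
  have "poisson (H_fun x) (S1_fun n A b x) a y pa py
      = a / deriv x a * (\<Sum>k=1..n. py^2 * (b k a * (real (2*k-1) * P ^ (2*k-2)) * py ^ (2*(n-k)+1))
                                  - 2 * P * (deriv (b k) a * P ^ (2*k-1) * py ^ (2*(n-k)+1)))
        - 2 * a * py * G_fun n A x a y pa py"
    unfolding P_def by (rule poisson_H_S1_expanded[OF x b])
  also have "(\<Sum>k=1..n. py^2 * (b k a * (real (2*k-1) * P ^ (2*k-2)) * py ^ (2*(n-k)+1))
                   - 2 * P * (deriv (b k) a * P ^ (2*k-1) * py ^ (2*(n-k)+1)))
      = py * (\<Sum>k=1..n. real (2*(k-1)+1) * b k a * (P^2)^(k-1) * (py^2)^(n-(k-1))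
                       - 2 * deriv (b k) a * (P^2)^k * (py^2)^(n-k))"
    by (rule odd_monomial_sum_regroup)
  also have "\<dots> = py * ((\<Sum>m\<le>n. real (2*m+1) * zero_padded n b (Suc m) a * (P^2)^m * (py^2)^(n-m))
                      - (\<Sum>m\<le>n. 2 * deriv (zero_padded n b m) a * (P^2)^m * (py^2)^(n-m)))"
    by (simp only: sum_subtractf sum_zero_padded_Suc[where g="\<lambda>m z. real (2*m+1) * z * (P^2)^m * (py^2)^(n-m)"]
        sum_deriv_zero_padded[where g="\<lambda>m z. 2 * z * (P^2)^m * (py^2)^(n-m)"] mult_zero_right mult_zero_left)
  also have "G_fun n A x a y pa py
      = (\<Sum>m\<le>n. taylor_coeff (\<lambda>a. \<Sum>k\<le>n. A k * a ^ k) m a * (P^2)^m * (py^2)^(n-m))"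
    unfolding G_fun_def H_fun_def P_def homogenized_poly_expansion[symmetric]
    by (simp add: power_mult)
  finally show ?thesis
    unfolding P_def by (simp add: sum_distrib_left sum_subtractf[symmetric] algebra_simps)
qed

lemma even_form_eq_zero_iff:
  fixes c :: "nat \<Rightarrow> real"
  shows "(\<forall>u v. v * (\<Sum>m\<le>n. c m * (u^2)^m * (v^2)^(n-m)) = 0) \<longleftrightarrow> (\<forall>m\<le>n. c m = 0)"
proof
  assume vanish: "\<forall>u v. v * (\<Sum>m\<le>n. c m * (u^2)^m * (v^2)^(n-m)) = 0"
  have "{0..} \<subseteq> {z. (\<Sum>m\<le>n. c m * z^m) = 0}"
  proof
    fix z :: real assume "z \<in> {0..}"
    then have "(sqrt z)^2 = z" by simp
    with vanish[rule_format, where u="sqrt z" and v=1] show "z \<in> {z. (\<Sum>m\<le>n. c m * z^m) = 0}" by simp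
  qed
  then have "infinite {z. (\<Sum>m\<le>n. c m * z^m) = 0}"
    using infinite_Ici finite_subset by blast
  then show "\<forall>m\<le>n. c m = 0"
    using polyfun_finite_roots by blast
qed simp

lemma poisson_H_S1_eq_zero_iff:
  fixes x :: "real \<Rightarrow> real" and b :: "nat \<Rightarrow> real \<Rightarrow> real"
  assumes x: "deriv x field_differentiable (at a)" "deriv x a \<noteq> 0" and a: "a > 0"
    and b: "\<And>k. k \<in> {1..n} \<Longrightarrow> b k field_differentiable (at a)"
  shows "(\<forall>y pa py. poisson (H_fun x) (S1_fun n A b x) a y pa py = 0)
     \<longleftrightarrow> (\<forall>m\<le>n. real (2*m+1) * zero_padded n b (Suc m) a - 2 * deriv (zero_padded n b m) a
                = 2 * deriv x a * taylor_coeff (\<lambda>a. \<Sum>k\<le>n. A k * a ^ k) m a)"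
proof -
  define c where "c m = a / deriv x a * (real (2*m+1) * zero_padded n b (Suc m) a
      - 2 * deriv (zero_padded n b m) a) - 2 * a * taylor_coeff (\<lambda>a. \<Sum>k\<le>n. A k * a ^ k) m a" for m
  have bracket: "poisson (H_fun x) (S1_fun n A b x) a y pa py
      = py * (\<Sum>m\<le>n. c m * (Pi_fun x a pa ^ 2) ^ m * (py ^ 2) ^ (n - m))" for y pa py
    unfolding c_def using x b by (rule poisson_H_S1)
  have c_zero: "c m = 0 \<longleftrightarrow> real (2*m+1) * zero_padded n b (Suc m) a - 2 * deriv (zero_padded n b m) a
                = 2 * deriv x a * taylor_coeff (\<lambda>a. \<Sum>k\<le>n. A k * a ^ k) m a" for m
  proof -
    have "c m = a / deriv x a * (real (2*m+1) * zero_padded n b (Suc m) a - 2 * deriv (zero_padded n b m) a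
                  - 2 * deriv x a * taylor_coeff (\<lambda>a. \<Sum>k\<le>n. A k * a ^ k) m a)"
      using x(2) by (simp add: c_def field_simps)
    then show ?thesis
      using x(2) a by simp
  qed
  have "Pi_fun x a (u * deriv x a / a) = u" for u
    using x(2) a by (simp add: Pi_fun_def)
  then have "(\<forall>y pa py. poisson (H_fun x) (S1_fun n A b x) a y pa py = 0)
      \<longleftrightarrow> (\<forall>u v. v * (\<Sum>m\<le>n. c m * (u^2)^m * (v^2)^(n-m)) = 0)"
    unfolding bracket by metis
  also have "\<dots> \<longleftrightarrow> (\<forall>m\<le>n. c m = 0)"
    by (rule even_form_eq_zero_iff)
  finally show ?thesis
    by (simp add: c_zero)
qed

lemma poisson_H_S1_eq_zero_on_iff:
  fixes x :: "real \<Rightarrow> real" and b :: "nat \<Rightarrow> real \<Rightarrow> real"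
  assumes "I \<subseteq> {0<..}" and x: "smooth_real_on I x" "\<forall>a\<in>I. deriv x a \<noteq> 0"
    and b: "\<forall>k\<in>{1..n}. smooth_real_on I (b k)"
  shows "(\<forall>a\<in>I. \<forall>y pa py. poisson (H_fun x) (S1_fun n A b x) a y pa py = 0)
     \<longleftrightarrow> (\<forall>m\<le>n. \<forall>a\<in>I. real (2*m+1) * zero_padded n b (Suc m) a - 2 * deriv (zero_padded n b m) a
                     = 2 * deriv x a * taylor_coeff (\<lambda>a. \<Sum>k\<le>n. A k * a ^ k) m a)"
proof -
  have "(\<forall>y pa py. poisson (H_fun x) (S1_fun n A b x) a y pa py = 0)
      \<longleftrightarrow> (\<forall>m\<le>n. real (2*m+1) * zero_padded n b (Suc m) a - 2 * deriv (zero_padded n b m) a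
                 = 2 * deriv x a * taylor_coeff (\<lambda>a. \<Sum>k\<le>n. A k * a ^ k) m a)" if a: "a \<in> I" for a
  proof (rule poisson_H_S1_eq_zero_iff)
    have "(deriv ^^ 1) x field_differentiable (at a)"
      using x(1) a unfolding smooth_real_on_def by blast
    then show "deriv x field_differentiable (at a)" by simp
    have "(deriv ^^ 0) (b k) field_differentiable (at a)" if "k \<in> {1..n}" for k
      using b a that unfolding smooth_real_on_def by blast
    then show "b k field_differentiable (at a)" if "k \<in> {1..n}" for k
      using that by simp
  qed (use assms a in auto)
  then show ?thesis by blast
qed

section \<open>The recursion for the coefficients\<close>

definition Op_tail :: "(real \<Rightarrow> real) \<Rightarrow> (real \<Rightarrow> real) \<Rightarrow> nat \<Rightarrow> real \<Rightarrow> real" where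
  "Op_tail F u m a = (\<Sum>s=1..m. taylor_coeff F (m-s) a * ((deriv ^^ s) u a / pochhammer (1/2) s))"

lemma Op_eq_Op_tail: "Op m F u a = taylor_coeff F m a * u a + Op_tail F u m a"
  unfolding Op_def Op_tail_def taylor_coeff_def
  by (subst sum.atLeast_Suc_atMost) auto

lemma deriv_add_const:
  fixes f :: "'a::real_normed_field \<Rightarrow> 'a"
  shows "deriv (\<lambda>t. f t + c) = deriv f"
proof -
  have iff: "((\<lambda>t. f t + c) has_field_derivative D) (at t) \<longleftrightarrow> (f has_field_derivative D) (at t)"
    for D t
  proof
    show "(f has_field_derivative D) (at t) \<Longrightarrow> ((\<lambda>t. f t + c) has_field_derivative D) (at t)"
      by (auto intro!: derivative_eq_intros)
    assume "((\<lambda>t. f t + c) has_field_derivative D) (at t)"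
    from DERIV_diff[OF this DERIV_const[of c]] show "(f has_field_derivative D) (at t)"
      by simp
  qed
  show ?thesis
    by (rule ext) (simp add: deriv_def iff)
qed

lemma Op_add_const: "Op m F (\<lambda>t. u t + c) a = Op m F u a + taylor_coeff F m a * c"
proof -
  have shift: "(deriv ^^ Suc s) (\<lambda>t. u t + c) = (deriv ^^ Suc s) u" for s
    by (simp only: funpow_Suc_right o_apply deriv_add_const)
  have "Op_tail F (\<lambda>t. u t + c) m a = Op_tail F u m a"
    unfolding Op_tail_def by (intro sum.cong) (auto dest!: Suc_le_D simp: shift simp del: funpow.simps)
  then show ?thesis by (simp add: Op_eq_Op_tail algebra_simps)
qed

lemma smooth_real_on_has_derivative:
  "smooth_real_on I f \<Longrightarrow> t \<in> I \<Longrightarrow> ((deriv ^^ k) f has_real_derivative (deriv ^^ Suc k) f t) (at t)"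
  unfolding smooth_real_on_def by (simp add: DERIV_deriv_iff_field_differentiable)

lemma taylor_coeff_has_derivative:
  assumes "((deriv ^^ m) F has_real_derivative (deriv ^^ Suc m) F a) (at a)"
  shows "(taylor_coeff F m has_real_derivative Suc m * taylor_coeff F (Suc m) a) (at a)"
proof -
  have "Suc m * taylor_coeff F (Suc m) a = (deriv ^^ Suc m) F a / fact m"
    by (simp add: taylor_coeff_def del: funpow.simps)
  with DERIV_cdivide[OF assms, of "fact m"] show ?thesis
    unfolding taylor_coeff_def[abs_def] by simp
qed

lemma pochhammer_half_Suc:
  "real (2 * s + 1) * (z / pochhammer (1/2) (Suc s)) = 2 * (z / pochhammer (1/2::real) s)"
proof -
  have q: "pochhammer (1/2::real) s > 0"
    by (rule pochhammer_pos) simp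
  have e: "pochhammer (1/2) (Suc s) * 2 = real (2 * s + 1) * pochhammer (1/2::real) s"
    by (simp add: pochhammer_rec' algebra_simps)
  have "pochhammer (1/2::real) (Suc s) > 0"
    by (rule pochhammer_pos) simp
  with q e show ?thesis
    by (simp add: field_simps)
qed

lemma Op_tail_has_derivative:
  assumes F: "smooth_real_on I F" and u: "smooth_real_on I u" and a: "a \<in> I"
  shows "(Op_tail F u m has_real_derivative
           (real (2*m+1) * Op_tail F u (Suc m) a - 2 * deriv u a * taylor_coeff F m a) / 2) (at a)"
proof -
  define c where "c j = taylor_coeff F j a" for j
  define g where "g s = (deriv ^^ s) u a" for s
  define p where "p s = pochhammer (1/2::real) s" for s
  define X where "X s = c (m-s) * g (Suc s) / p (Suc s)" for s
  define Y where "Y s = c (m-s) * g (Suc s) / p s" for s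
  have "p s \<noteq> 0" for s
    unfolding p_def by (simp add: pochhammer_eq_0_iff)
  have "(Op_tail F u m has_real_derivative
          (\<Sum>s=1..m. Suc (m-s) * c (Suc (m-s)) * g s / p s + c (m-s) * g (Suc s) / p s)) (at a)"
    unfolding Op_tail_def[abs_def] c_def g_def p_def
    by (intro DERIV_sum)
      (auto intro!: derivative_eq_intros taylor_coeff_has_derivative
         smooth_real_on_has_derivative[OF F a] smooth_real_on_has_derivative[OF u a]
         simp: add_divide_distrib \<open>\<And>s. p s \<noteq> 0\<close>[unfolded p_def])
  also have "(\<Sum>s=1..m. Suc (m-s) * c (Suc (m-s)) * g s / p s + c (m-s) * g (Suc s) / p s)
      = (\<Sum>s<m. (m-s) * X s) + (\<Sum>s<m. Y (Suc s))"
    by (simp add: sum.atLeast1_atMost_eq sum.distrib X_def Y_def Suc_diff_Suc mult.assoc)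
  also have "\<dots> = (real (2*m+1) * Op_tail F u (Suc m) a - 2 * deriv u a * taylor_coeff F m a) / 2"
  proof -
    have XY: "real (2 * s + 1) * X s = 2 * Y s" for s
      unfolding X_def Y_def p_def by (rule pochhammer_half_Suc)
    have "Op_tail F u (Suc m) a = (\<Sum>s<Suc m. X s)"
      by (simp add: Op_tail_def sum.atLeast1_atMost_eq X_def c_def g_def p_def del: funpow.simps)
    then have "real (2*m+1) * Op_tail F u (Suc m) a = (\<Sum>s<Suc m. real (2*m+1) * X s)"
      by (simp only: sum_distrib_left)
    also have "\<dots> = (\<Sum>s<Suc m. 2 * ((m-s) * X s) + real (2 * s + 1) * X s)"
      by (intro sum.cong) (auto simp: of_nat_diff algebra_simps)
    also have "\<dots> = 2 * (\<Sum>s<Suc m. (m-s) * X s) + 2 * (\<Sum>s<Suc m. Y s)"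
      by (simp only: sum.distrib XY sum_distrib_left)
    also have "\<dots> = 2 * (\<Sum>s<m. (m-s) * X s) + 2 * Y 0 + 2 * (\<Sum>s<m. Y (Suc s))"
      by (subst sum.lessThan_Suc_shift[of Y]) simp
    finally show ?thesis
      by (simp add: Y_def c_def g_def p_def)
  qed
  finally show ?thesis .
qed

lemma deriv_Op_tail_on:
  assumes "open I" "smooth_real_on I F" "smooth_real_on I u"
    and "\<forall>t\<in>I. \<beta> t = Op_tail F u m t" "a \<in> I"
  shows "deriv \<beta> a = (real (2*m+1) * Op_tail F u (Suc m) a - 2 * deriv u a * taylor_coeff F m a) / 2"
  using assms by (intro DERIV_imp_deriv has_field_derivative_transform_within_open[OF
      Op_tail_has_derivative[of I F u a m]]) auto

lemma recursion_iff_Op_tail: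
  assumes I: "open I" and F: "smooth_real_on I F" and u: "smooth_real_on I u"
    and \<beta>0: "\<forall>t\<in>I. \<beta> 0 t = 0"
  shows "(\<forall>m<n. \<forall>t\<in>I. real (2*m+1) * \<beta> (Suc m) t - 2 * deriv (\<beta> m) t
              = 2 * deriv u t * taylor_coeff F m t)
     \<longleftrightarrow> (\<forall>k\<le>n. \<forall>t\<in>I. \<beta> k t = Op_tail F u k t)"
    (is "(\<forall>m<n. ?rec m) \<longleftrightarrow> (\<forall>k\<le>n. ?closed k)")
proof
  assume rec: "\<forall>m<n. ?rec m"
  show "\<forall>k\<le>n. ?closed k"
  proof (intro allI impI)
    fix k assume "k \<le> n"
    then show "?closed k"
    proof (induction k)
      case 0
      then show ?case using \<beta>0 by (simp add: Op_tail_def)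
    next
      case (Suc k)
      then have closed: "?closed k" and "?rec k" using rec by auto
      show ?case
      proof
        fix t assume t: "t \<in> I"
        have "real (2*k+1) * \<beta> (Suc k) t = real (2*k+1) * Op_tail F u (Suc k) t"
          using bspec[OF \<open>?rec k\<close> t] deriv_Op_tail_on[OF I F u closed t]
          by (simp add: field_simps)
        then show "\<beta> (Suc k) t = Op_tail F u (Suc k) t" by simp
      qed
    qed
  qed
next
  assume closed: "\<forall>k\<le>n. ?closed k"
  show "\<forall>m<n. ?rec m"
  proof (intro allI impI ballI)
    fix m t assume "m < n" "t \<in> I"
    with closed deriv_Op_tail_on[OF I F u _ \<open>t \<in> I\<close>, of "\<beta> m" m]
    show "real (2*m+1) * \<beta> (Suc m) t - 2 * deriv (\<beta> m) t = 2 * deriv u t * taylor_coeff F m t"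
      by (simp add: field_simps)
  qed
qed

lemma deriv_zero_iff_constant_on:
  fixes f f' :: "real \<Rightarrow> real"
  assumes I: "open I" "is_interval I" and f: "\<And>t. t \<in> I \<Longrightarrow> (f has_real_derivative f' t) (at t)"
  shows "(\<forall>t\<in>I. f' t = 0) \<longleftrightarrow> (\<exists>c. \<forall>t\<in>I. f t = c)"
proof
  assume "\<forall>t\<in>I. f' t = 0"
  then show "\<exists>c. \<forall>t\<in>I. f t = c"
    using f by (intro has_field_derivative_zero_constant is_interval_convex[OF I(2)])
      (auto intro: has_field_derivative_at_within)
next
  assume "\<exists>c. \<forall>t\<in>I. f t = c"
  then obtain c where c: "\<forall>t\<in>I. f t = c" by blast
  have "(f has_real_derivative 0) (at t)" if "t \<in> I" for t
    using c that by (intro has_field_derivative_transform_within_open[OF DERIV_const I(1)]) auto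
  with f show "\<forall>t\<in>I. f' t = 0"
    using DERIV_unique by blast
qed

lemma coefficient_equations_iff:
  assumes I: "open I" "is_interval I" and F: "smooth_real_on I F" and u: "smooth_real_on I u"
    and top: "\<forall>t\<in>I. taylor_coeff F n t = 1"
    and \<beta>0: "\<forall>t\<in>I. \<beta> 0 t = 0" and \<beta>_top: "\<forall>t\<in>I. \<beta> (Suc n) t = 0"
  shows "(\<forall>m\<le>n. \<forall>t\<in>I. real (2*m+1) * \<beta> (Suc m) t - 2 * deriv (\<beta> m) t
              = 2 * deriv u t * taylor_coeff F m t)
     \<longleftrightarrow> (\<forall>k\<le>n. \<forall>t\<in>I. \<beta> k t = Op_tail F u k t) \<and> (\<exists>c. \<forall>t\<in>I. Op n F (\<lambda>t. u t + c) t = 0)"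
    (is "(\<forall>m\<le>n. ?rec m) \<longleftrightarrow> ?closed \<and> ?ode")
proof -
  have "(\<forall>m\<le>n. ?rec m) \<longleftrightarrow> (\<forall>m<n. ?rec m) \<and> ?rec n"
    by (auto simp: le_less)
  moreover have "?rec n \<longleftrightarrow> (\<forall>t\<in>I. deriv u t + deriv (\<beta> n) t = 0)"
    using top \<beta>_top by auto
  moreover have "(\<forall>t\<in>I. deriv u t + deriv (\<beta> n) t = 0) \<longleftrightarrow> ?ode"
    if closed: "\<forall>t\<in>I. \<beta> n t = Op_tail F u n t"
  proof -
    have "(\<forall>t\<in>I. deriv u t + deriv (\<beta> n) t = 0) \<longleftrightarrow> (\<exists>c. \<forall>t\<in>I. u t + Op_tail F u n t = c)"
    proof (rule deriv_zero_iff_constant_on[OF I])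
      fix t assume t: "t \<in> I"
      show "((\<lambda>t. u t + Op_tail F u n t) has_real_derivative deriv u t + deriv (\<beta> n) t) (at t)"
        unfolding deriv_Op_tail_on[OF I(1) F u closed t]
        using DERIV_add[OF smooth_real_on_has_derivative[OF u t, of 0] Op_tail_has_derivative[OF F u t]]
        by simp
    qed
    also have "\<dots> \<longleftrightarrow> (\<exists>c. \<forall>t\<in>I. u t + Op_tail F u n t + c = 0)"
      by (metis eq_neg_iff_add_eq_0 minus_minus)
    also have "\<dots> \<longleftrightarrow> ?ode"
      using top by (simp only: Op_add_const) (simp add: Op_eq_Op_tail add_ac)
    finally show ?thesis .
  qed
  ultimately show ?thesis
    using recursion_iff_Op_tail[where \<beta>=\<beta> and n=n, OF I(1) F u \<beta>0] by auto
qed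

theorem proposition5:
  fixes n :: nat and A :: "nat \<Rightarrow> real" and I :: "real set"
    and x :: "real \<Rightarrow> real" and b :: "nat \<Rightarrow> real \<Rightarrow> real"
  assumes "n \<ge> 2" and "A n = 1"
    and "open I" and "is_interval I" and "I \<subseteq> {0<..}"
    and "smooth_real_on I x" and "\<forall>a\<in>I. deriv x a \<noteq> 0"
    and "\<forall>k\<in>{1..n}. smooth_real_on I (b k)"
  defines "F \<equiv> (\<lambda>a. \<Sum>k\<le>n. A k * a ^ k)"
  shows "(\<forall>a\<in>I. \<forall>y pa py. poisson (H_fun x) (S1_fun n A b x) a y pa py = 0) \<longleftrightarrow>
    ((\<forall>k\<in>{1..n}. \<forall>a\<in>I.
        b k a = (\<Sum>s=1..k. (deriv ^^ (k-s)) F a / fact (k-s) * ((deriv ^^ s) x a / pochhammer (1/2) s))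
      \<and> b k a = Op k F x a - (deriv ^^ k) F a / fact k * x a)
     \<and> (\<exists>c. \<forall>a\<in>I. Op n F (\<lambda>t. x t + c) a = 0))"
proof -
  have "(\<forall>a\<in>I. \<forall>y pa py. poisson (H_fun x) (S1_fun n A b x) a y pa py = 0)
      \<longleftrightarrow> (\<forall>m\<le>n. \<forall>a\<in>I. real (2*m+1) * zero_padded n b (Suc m) a - 2 * deriv (zero_padded n b m) a
                       = 2 * deriv x a * taylor_coeff F m a)"
    unfolding F_def using assms(5-8) by (rule poisson_H_S1_eq_zero_on_iff)
  also have "\<dots> \<longleftrightarrow> (\<forall>k\<le>n. \<forall>a\<in>I. zero_padded n b k a = Op_tail F x k a)
                    \<and> (\<exists>c. \<forall>a\<in>I. Op n F (\<lambda>t. x t + c) a = 0)"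
    using assms(2-4,6) unfolding F_def
    by (intro coefficient_equations_iff smooth_real_on_poly) (auto simp: taylor_coeff_poly_top zero_padded_def)
  also have "(\<forall>k\<le>n. \<forall>a\<in>I. zero_padded n b k a = Op_tail F x k a)
      \<longleftrightarrow> (\<forall>k\<in>{1..n}. \<forall>a\<in>I. b k a = Op_tail F x k a)"
    by (auto simp: zero_padded_def Op_tail_def)
  finally show ?thesis
    by (simp add: Op_eq_Op_tail Op_tail_def taylor_coeff_def)
qed

end
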